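(* Let $V$ be a finite set, let $d\ge 1$, let $R=(\le_1,\ldots,\le_d)$ be a $d$-representation on $V$, and let $R'=(\le_1,\ldots,\le_{d-1})$. For every $F\in\Sigma(R)\setminus\Sigma(R')$, the set $\{x\in V : x<_i \max_{\le_i}F \text{ for all } i\in\{1,\ldots,d-1\}\}$ is nonempty. Consequently the map $\psi:\Sigma(R)\setminus\Sigma(R')\to V$, $\psi(F)=\min_{\le_d}\{x\in V : x<_i\max_{\le_i}F \ \forall i\in\{1,\ldots,d-1\}\}$, is well-defined.
   Context: A $k$-representation on $V$ is a family of $k$ linear orders on $V$. For a linear order $\le$ on $V$, $x\in V$ and $F\subseteq V$, $x$ dominates $F$ in $\le$ if $f\le x$ for all $f\in F$; $x$ dominates $F$ in a representation if it dominates $F$ in at least one of its orders. For a representation $S$ on $V$, the supremum section $\Sigma(S)$ is the set of subsets $F\subseteq V$ such that every $v\in V$ dominates $F$ in $S$. When $d=1$, $R'$ has no orders and the same definition applies (the condition on $x$ is then vacuous). $<_i$ denotes the strict order associated with $\le_i$. *)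

theory Defs
  imports Main
begin

definition is_representation :: "'a set \<Rightarrow> nat \<Rightarrow> (nat \<Rightarrow> ('a \<times> 'a) set) \<Rightarrow> bool" where
  "is_representation V k R \<longleftrightarrow> (\<forall>i\<in>{1..k}. linear_order_on V (R i))"

definition dominates_in :: "('a \<times> 'a) set \<Rightarrow> 'a \<Rightarrow> 'a set \<Rightarrow> bool" where
  "dominates_in r x F \<longleftrightarrow> (\<forall>f\<in>F. (f, x) \<in> r)"

definition dominates_rep :: "nat \<Rightarrow> (nat \<Rightarrow> ('a \<times> 'a) set) \<Rightarrow> 'a \<Rightarrow> 'a set \<Rightarrow> bool" where
  "dominates_rep k R x F \<longleftrightarrow> (\<exists>i\<in>{1..k}. dominates_in (R i) x F)"

definition supremum_section :: "'a set \<Rightarrow> nat \<Rightarrow> (nat \<Rightarrow> ('a \<times> 'a) set) \<Rightarrow> 'a set set" where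
  "supremum_section V k R = {F. F \<subseteq> V \<and> (\<forall>v\<in>V. dominates_rep k R v F)}"

definition max_wrt :: "('a \<times> 'a) set \<Rightarrow> 'a set \<Rightarrow> 'a" where
  "max_wrt r F = (THE m. m \<in> F \<and> (\<forall>f\<in>F. (f, m) \<in> r))"

definition strict_less :: "('a \<times> 'a) set \<Rightarrow> 'a \<Rightarrow> 'a \<Rightarrow> bool" where
  "strict_less r x y \<longleftrightarrow> (x, y) \<in> r \<and> x \<noteq> y"

end

theory Submission
  imports Defs
begin

text \<open>A vertex v witnessing F \<notin> \<Sigma>(R') fails to dominate F in each of the first d - 1
  orders, so some element of F, and hence max F, lies strictly above v there. Thus v belongs
  to the set whose minimum in the d-th order defines \<psi>(F), and over a finite ground set this
  minimum exists and is unique.\<close>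

lemma linear_order_on_not_le_imp_ge:
  assumes "linear_order_on V r" and "x \<in> V" and "y \<in> V" and "(x, y) \<notin> r"
  shows "(y, x) \<in> r"
  using assms refl_onD[of V r x] unfolding order_on_defs total_on_def by metis

lemma linear_order_on_ex_least:
  assumes lin: "linear_order_on V r" and "finite V" and "S \<noteq> {}" and "S \<subseteq> V"
  shows "\<exists>m\<in>S. \<forall>y\<in>S. (m, y) \<in> r"
proof -
  have "r \<subseteq> V \<times> V"
    using lin by (auto simp: order_on_defs refl_on_def)
  then have "finite r"
    using \<open>finite V\<close> finite_subset by blast
  then have "wf (r - Id)"
    using finite_acyclic_wf linear_order_on_acyclic[OF lin] by blast
  then obtain m where m: "m \<in> S" and minimal: "\<And>y. (y, m) \<in> r - Id \<Longrightarrow> y \<notin> S"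
    using wfE_min[of "r - Id" _ S] \<open>S \<noteq> {}\<close> by blast
  have "(m, y) \<in> r" if "y \<in> S" for y
    using linear_order_on_not_le_imp_ge[OF lin, of m y] minimal[of y] m that \<open>S \<subseteq> V\<close>
    by blast
  with m show ?thesis by blast
qed

lemma linear_order_on_ex1_least:
  assumes lin: "linear_order_on V r" and "finite V" and "S \<noteq> {}" and "S \<subseteq> V"
  shows "\<exists>!m. m \<in> S \<and> (\<forall>y\<in>S. (m, y) \<in> r)"
proof -
  have "antisym r"
    using lin by (simp add: order_on_defs)
  with linear_order_on_ex_least[OF assms] show ?thesis
    by (auto dest: antisymD)
qed

lemma max_wrt_greatest:
  assumes lin: "linear_order_on V r" and "finite V" and "F \<noteq> {}" and "F \<subseteq> V"
  shows "max_wrt r F \<in> F" and "\<And>f. f \<in> F \<Longrightarrow> (f, max_wrt r F) \<in> r"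
proof -
  have "\<exists>!m. m \<in> F \<and> (\<forall>f\<in>F. (f, m) \<in> r)"
    using linear_order_on_ex1_least[OF linear_order_on_converse[THEN iffD2, OF lin] assms(2-)]
    by simp
  then have "max_wrt r F \<in> F \<and> (\<forall>f\<in>F. (f, max_wrt r F) \<in> r)"
    unfolding max_wrt_def by (rule theI')
  then show "max_wrt r F \<in> F" and "\<And>f. f \<in> F \<Longrightarrow> (f, max_wrt r F) \<in> r"
    by auto
qed

lemma not_dominates_in_imp_strict_less_max_wrt:
  assumes lin: "linear_order_on V r" and "finite V" and "F \<subseteq> V" and "v \<in> V"
    and "\<not> dominates_in r v F"
  shows "strict_less r v (max_wrt r F)"
proof -
  obtain f where f: "f \<in> F" "(f, v) \<notin> r"
    using \<open>\<not> dominates_in r v F\<close> unfolding dominates_in_def by blast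
  have "f \<in> V"
    using f \<open>F \<subseteq> V\<close> by blast
  then have "(v, f) \<in> r"
    using linear_order_on_not_le_imp_ge[OF lin] f \<open>v \<in> V\<close> by blast
  moreover have "(f, max_wrt r F) \<in> r" and "max_wrt r F \<in> F"
    using max_wrt_greatest[OF assms(1-2) _ \<open>F \<subseteq> V\<close>] f by blast+
  moreover have "trans r"
    using lin by (simp add: order_on_defs)
  ultimately show ?thesis
    using f unfolding strict_less_def by (metis transD)
qed

theorem lemma2:
  fixes V :: "'a set" and d :: nat and R :: "nat \<Rightarrow> ('a \<times> 'a) set" and F :: "'a set"
  assumes "finite V" and "d \<ge> 1"
    and "is_representation V d R"
    and "F \<in> supremum_section V d R - supremum_section V (d - 1) R"
  shows "{x \<in> V. \<forall>i\<in>{1..d-1}. strict_less (R i) x (max_wrt (R i) F)} \<noteq> {}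
    \<and> (\<exists>!m. m \<in> {x \<in> V. \<forall>i\<in>{1..d-1}. strict_less (R i) x (max_wrt (R i) F)}
             \<and> (\<forall>y \<in> {x \<in> V. \<forall>i\<in>{1..d-1}. strict_less (R i) x (max_wrt (R i) F)}. (m, y) \<in> R d))"
proof -
  let ?S = "{x \<in> V. \<forall>i\<in>{1..d-1}. strict_less (R i) x (max_wrt (R i) F)}"
  have lin: "\<And>i. i \<in> {1..d} \<Longrightarrow> linear_order_on V (R i)"
    using assms(3) unfolding is_representation_def by blast
  obtain v where "v \<in> V" and v: "\<And>i. i \<in> {1..d-1} \<Longrightarrow> \<not> dominates_in (R i) v F"
    and "F \<subseteq> V"
    using assms(4) unfolding supremum_section_def dominates_rep_def by blast
  have "v \<in> ?S"
    using not_dominates_in_imp_strict_less_max_wrt[OF lin \<open>finite V\<close> \<open>F \<subseteq> V\<close> \<open>v \<in> V\<close> v]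
      \<open>v \<in> V\<close> by auto
  then have "?S \<noteq> {}"
    by blast
  moreover have "\<exists>!m. m \<in> ?S \<and> (\<forall>y\<in>?S. (m, y) \<in> R d)"
    using linear_order_on_ex1_least[OF lin \<open>finite V\<close> \<open>?S \<noteq> {}\<close>] assms(2) by auto
  ultimately show ?thesis
    by blast
qed

end
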